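(* Consider $K$ patches in an environment alternating periodically $e_1,e_2,e_1,e_2,\dots$ (state $e_1$ at even generations). Assume $\mathbb E(N_i(w)\log^+N_i(w))<\infty$ and $m_i(w)>0$ for all $i$ and $w\in\{e_1,e_2\}$, and that $D$ is irreducible and aperiodic. Let $\rho>0$ be such that $\rho^2$ is the maximal (Perron) eigenvalue of the two-generation mean matrix $A^{(2)}$ with entries $a_{ij}=\sum_{k=1}^K m_i(e_1)d_{ik}m_k(e_2)d_{kj}$. Then $$ 2\log\rho=\max\{R(f)-I(f): f\in\mathcal F_{\mathcal E}\}. $$
   Context: Model with environment: at each generation, every individual in patch $i$ independently produces $N_i(w)$ offspring, $w$ being the current environment state, with mean $m_i(w)$; each offspring independently moves from $i$ to $j$ with probability $d_{ij}$ ($D$ stochastic, environment-independent). $(X_n)$ is the Markov chain with transition matrix $D$. $\mathcal E:=\{1,\dots,K\}^2$ (ordered pairs of patches) and $B$ is the transition matrix of the Markov chain $(X_{2n},X_{2n+1})_{n\ge0}$ on $\mathcal E$, i.e. $B_{(i,j),(k,l)}=d_{jk}d_{kl}$. $\mathcal F_{\mathcal E}:=\{(f_E)_{E\in\mathcal E}: f_E\ge0,\ \sum_Ef_E=1\}$. For $f\in\mathcal F_{\mathcal E}$: $I(f):=\sup\{\sum_{E\in\mathcal E}f_E\log(v_E/(vB)_E): v=(v_E)_{E\in\mathcal E},\ v_E>0\ \forall E\}$ (possibly $+\infty$) and $R(f):=\sum_{E=(i,j)\in\mathcal E}f_E\log\big(m_i(e_1)m_j(e_2)\big)$. *)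

theory Defs
  imports "HOL-Probability.Probability"
begin

text \<open>Patches are indexed by 0..K-1. The dispersal matrix D is d :: nat => nat => real.\<close>

definition stochastic_mat :: "nat \<Rightarrow> (nat \<Rightarrow> nat \<Rightarrow> real) \<Rightarrow> bool" where
  "stochastic_mat K d \<longleftrightarrow> (\<forall>i<K. \<forall>j<K. 0 \<le> d i j) \<and> (\<forall>i<K. (\<Sum>j<K. d i j) = 1)"

fun mpow :: "nat \<Rightarrow> (nat \<Rightarrow> nat \<Rightarrow> real) \<Rightarrow> nat \<Rightarrow> nat \<Rightarrow> nat \<Rightarrow> real" where
  "mpow K d 0 i j = (if i = j then 1 else 0)"
| "mpow K d (Suc n) i j = (\<Sum>k<K. mpow K d n i k * d k j)"

definition irreducible_mat :: "nat \<Rightarrow> (nat \<Rightarrow> nat \<Rightarrow> real) \<Rightarrow> bool" where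
  "irreducible_mat K d \<longleftrightarrow> (\<forall>i<K. \<forall>j<K. \<exists>n>0. mpow K d n i j > 0)"

definition aperiodic_mat :: "nat \<Rightarrow> (nat \<Rightarrow> nat \<Rightarrow> real) \<Rightarrow> bool" where
  "aperiodic_mat K d \<longleftrightarrow> (\<forall>i<K. Gcd {n::nat. n > 0 \<and> mpow K d n i i > 0} = 1)"

definition mean_off :: "nat pmf \<Rightarrow> real" where
  "mean_off p = measure_pmf.expectation p real"

definition logplus :: "real \<Rightarrow> real" where
  "logplus x = max 0 (ln x)"

definition A2 :: "nat \<Rightarrow> (nat \<Rightarrow> nat \<Rightarrow> real) \<Rightarrow> (nat \<Rightarrow> real) \<Rightarrow> (nat \<Rightarrow> real) \<Rightarrow> nat \<Rightarrow> nat \<Rightarrow> real" where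
  "A2 K d m1 m2 i j = (\<Sum>k<K. m1 i * d i k * m2 k * d k j)"

definition is_eigenvalue :: "nat \<Rightarrow> (nat \<Rightarrow> nat \<Rightarrow> real) \<Rightarrow> complex \<Rightarrow> bool" where
  "is_eigenvalue K A lam \<longleftrightarrow> (\<exists>x :: nat \<Rightarrow> complex. (\<exists>i<K. x i \<noteq> 0) \<and>
      (\<forall>i<K. (\<Sum>j<K. complex_of_real (A i j) * x j) = lam * x i))"

definition perron_eigenvalue :: "nat \<Rightarrow> (nat \<Rightarrow> nat \<Rightarrow> real) \<Rightarrow> real \<Rightarrow> bool" where
  "perron_eigenvalue K A r \<longleftrightarrow> is_eigenvalue K A (complex_of_real r) \<and>
      (\<forall>lam. is_eigenvalue K A lam \<longrightarrow> cmod lam \<le> r)"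

definition pairsK :: "nat \<Rightarrow> (nat \<times> nat) set" where
  "pairsK K = {..<K} \<times> {..<K}"

definition Bmat :: "(nat \<Rightarrow> nat \<Rightarrow> real) \<Rightarrow> nat \<times> nat \<Rightarrow> nat \<times> nat \<Rightarrow> real" where
  "Bmat d E E' = d (snd E) (fst E') * d (fst E') (snd E')"

definition vB :: "nat \<Rightarrow> (nat \<Rightarrow> nat \<Rightarrow> real) \<Rightarrow> (nat \<times> nat \<Rightarrow> real) \<Rightarrow> nat \<times> nat \<Rightarrow> real" where
  "vB K d v E = (\<Sum>E'\<in>pairsK K. v E' * Bmat d E' E)"

definition FE :: "nat \<Rightarrow> (nat \<times> nat \<Rightarrow> real) set" where
  "FE K = {f. (\<forall>E\<in>pairsK K. 0 \<le> f E) \<and> (\<Sum>E\<in>pairsK K. f E) = 1}"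

text \<open>One summand f_E log(v_E/(vB)_E), with conventions 0 * anything = 0 and
  log(v/0) = +infinity for v > 0.\<close>
definition dv_term :: "real \<Rightarrow> real \<Rightarrow> real \<Rightarrow> ereal" where
  "dv_term fE vE wE = (if fE = 0 then 0 else if wE = 0 then \<infinity> else ereal (fE * ln (vE / wE)))"

definition I_rate :: "nat \<Rightarrow> (nat \<Rightarrow> nat \<Rightarrow> real) \<Rightarrow> (nat \<times> nat \<Rightarrow> real) \<Rightarrow> ereal" where
  "I_rate K d f = (SUP v\<in>{v :: nat \<times> nat \<Rightarrow> real. \<forall>E\<in>pairsK K. 0 < v E}.
      \<Sum>E\<in>pairsK K. dv_term (f E) (v E) (vB K d v E))"

definition R_fun :: "nat \<Rightarrow> (nat \<Rightarrow> real) \<Rightarrow> (nat \<Rightarrow> real) \<Rightarrow> (nat \<times> nat \<Rightarrow> real) \<Rightarrow> real" where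
  "R_fun K m1 m2 f = (\<Sum>E\<in>pairsK K. f E * ln (m1 (fst E) * m2 (snd E)))"

end

theory Submission
  imports Defs
begin

(* Write r = rho^2 for the Perron root of the two-generation mean matrix A2, V(i,j) = m_i(e1) m_j(e2)
   for the mean offspring weight of a pair of patches, and M = B diag(V).

   1. Linear algebra.  A2 is nonnegative, and it is irreducible because aperiodicity of D joins any
      two patches by a path of even length.  The Collatz-Wielandt argument then gives positive right
      and left eigenvectors psi and t of A2, and the hypothesis that r dominates every eigenvalue
      forces both of their eigenvalues to equal r.
   2. R(f) - I(f) <= log r for every frequency vector f.  If f charges a pair (i,j) with d_ij = 0,
      then I(f) is infinite.  Otherwise we test I(f) with the lift v0(i,j) = d_ij V(i,j) t_i of t,
      which satisfies v0 / (v0 B) = V / r on the pairs with d_ij > 0; since v0 may vanish, the test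
      vectors v0 + eps are used and eps tends to 0.
   3. Equality at f0 ~ v0(i,j) (D psi)_j.  Since v0 and (D psi)_j are left and right eigenvectors of M,
      a Donsker-Varadhan inequality (Jensen's inequality for the stochastic matrix obtained by tilting
      M with v0) yields I(f0) <= R(f0) - log r. *)

section \<open>Matrix powers\<close>

lemma sum_pos_obtain:
  fixes g :: "'a \<Rightarrow> real"
  assumes "0 < sum g A"
  obtains x where "x \<in> A" "0 < g x"
  using assms sum_nonpos[of A g] by (meson not_le)

lemma mpow_add:
  assumes "j < K"
  shows "mpow K A (a + b) i j = (\<Sum>k<K. mpow K A a i k * mpow K A b k j)"
  using assms
proof (induction b arbitrary: j)
  case 0
  then show ?case by (simp add: if_distrib cong: if_cong)
next
  case (Suc b)
  have "mpow K A (a + Suc b) i j = (\<Sum>k<K. mpow K A (a+b) i k * A k j)" by simp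
  also have "\<dots> = (\<Sum>k<K. (\<Sum>q<K. mpow K A a i q * mpow K A b q k) * A k j)"
    using Suc.IH by (intro sum.cong) auto
  also have "\<dots> = (\<Sum>q<K. mpow K A a i q * (\<Sum>k<K. mpow K A b q k * A k j))"
    by (simp add: sum_distrib_left sum_distrib_right mult.assoc) (rule sum.swap)
  finally show ?case by simp
qed

lemma mpow_one: assumes "i < K" shows "mpow K A (Suc 0) i j = A i j"
proof -
  have "mpow K A (Suc 0) i j = (\<Sum>k<K. if i = k then A k j else 0)"
    by (simp only: mpow.simps, rule sum.cong) auto
  then show ?thesis using assms by simp
qed

lemma mpow_Suc_left:
  assumes "i < K" "j < K"
  shows "mpow K A (Suc n) i j = (\<Sum>k<K. A i k * mpow K A n k j)"
  using mpow_add[of j K A "Suc 0" n i] mpow_one[OF assms(1)] assms by simp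

lemma mpow_mult:
  assumes "j < K"
  shows "mpow K A (a * b) i j = mpow K (mpow K A a) b i j"
  using assms
proof (induction b arbitrary: j)
  case 0
  then show ?case by simp
next
  case (Suc b)
  have "mpow K A (a * b + a) i j = (\<Sum>k<K. mpow K A (a * b) i k * mpow K A a k j)"
    by (rule mpow_add[OF Suc.prems])
  also have "\<dots> = (\<Sum>k<K. mpow K (mpow K A a) b i k * mpow K A a k j)"
    using Suc.IH by (intro sum.cong) auto
  finally show ?case by (simp add: add.commute)
qed

lemma mpow_nonneg:
  assumes "\<forall>i<K. \<forall>j<K. 0 \<le> A i j" "i < K" "j < K"
  shows "0 \<le> mpow K A n i j"
  using assms(2,3)
proof (induction n arbitrary: j)
  case 0 then show ?case by simp
next
  case (Suc n)
  then show ?case using assms(1) by (auto intro!: sum_nonneg)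
qed

lemma mpow_mult_le:
  assumes "\<forall>i<K. \<forall>j<K. 0 \<le> A i j" "i < K" "j < K" "k < K"
  shows "mpow K A a i k * mpow K A b k j \<le> mpow K A (a + b) i j"
proof -
  have "mpow K A a i k * mpow K A b k j \<le> (\<Sum>k<K. mpow K A a i k * mpow K A b k j)"
    using assms by (intro member_le_sum) (auto intro!: mult_nonneg_nonneg mpow_nonneg)
  then show ?thesis using mpow_add[OF assms(3)] by simp
qed

lemma mpow_pos_mono:
  assumes A: "\<forall>i<K. \<forall>j<K. 0 \<le> A i j" and C: "\<forall>i<K. \<forall>j<K. 0 \<le> C i j"
    and CA: "\<forall>i<K. \<forall>j<K. 0 < C i j \<longrightarrow> 0 < A i j"
    and ij: "i < K" "j < K" and pos: "0 < mpow K C n i j"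
  shows "0 < mpow K A n i j"
  using ij(2) pos
proof (induction n arbitrary: j)
  case 0
  then show ?case by simp
next
  case (Suc n)
  then have "0 < (\<Sum>k<K. mpow K C n i k * C k j)" by simp
  then obtain k where k: "k < K" "0 < mpow K C n i k * C k j" by (rule sum_pos_obtain) simp
  moreover have "0 \<le> mpow K C n i k" "0 \<le> C k j"
    using C mpow_nonneg[OF C ij(1) k(1)] k(1) Suc.prems(1) by auto
  ultimately have "0 < mpow K C n i k" "0 < C k j" by (auto simp: zero_less_mult_iff)
  then have "0 < mpow K A n i k * A k j" using Suc.IH k(1) CA Suc.prems by auto
  also have "\<dots> \<le> (\<Sum>k<K. mpow K A n i k * A k j)"
    using A mpow_nonneg[OF A ij(1)] k(1) Suc.prems by (intro member_le_sum) auto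
  finally show ?case by simp
qed

lemma mpow_transpose:
  assumes "i < K" "j < K"
  shows "mpow K (\<lambda>i j. A j i) n i j = mpow K A n j i"
  using assms
proof (induction n arbitrary: i j)
  case 0 then show ?case by simp
next
  case (Suc n)
  have "mpow K (\<lambda>i j. A j i) (Suc n) i j = (\<Sum>k<K. mpow K A n k i * A j k)"
    using Suc by simp
  also have "\<dots> = mpow K A (Suc n) j i"
    using mpow_Suc_left[of j K i A n] Suc.prems by (simp add: mult.commute)
  finally show ?case .
qed

lemma irreducible_transpose:
  assumes "irreducible_mat K A"
  shows "irreducible_mat K (\<lambda>i j. A j i)"
  using assms unfolding irreducible_mat_def by (metis mpow_transpose)

lemma mpow_vec_Suc_left:
  assumes "i < K"
  shows "(\<Sum>j<K. mpow K A (Suc k) i j * x j) = (\<Sum>l<K. A i l * (\<Sum>j<K. mpow K A k l j * x j))"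
proof -
  have "(\<Sum>j<K. mpow K A (Suc k) i j * x j) = (\<Sum>j<K. \<Sum>l<K. A i l * mpow K A k l j * x j)"
    using assms by (intro sum.cong) (simp_all add: mpow_Suc_left sum_distrib_right del: mpow.simps)
  also have "\<dots> = (\<Sum>l<K. A i l * (\<Sum>j<K. mpow K A k l j * x j))"
    by (subst sum.swap) (simp add: sum_distrib_left mult.assoc)
  finally show ?thesis .
qed

lemma mpow_vec_Suc_right:
  "(\<Sum>j<K. mpow K A (Suc k) i j * x j) = (\<Sum>l<K. mpow K A k i l * (\<Sum>j<K. A l j * x j))"
  by (simp add: sum_distrib_left sum_distrib_right mult.assoc) (rule sum.swap)

lemma mpow_eigenvector:
  assumes eig: "\<forall>i<K. (\<Sum>j<K. A i j * y j) = lam * y i" and i: "i < K"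
  shows "(\<Sum>j<K. mpow K A n i j * y j) = lam ^ n * y i"
  using i
proof (induction n arbitrary: i)
  case 0
  have "(\<Sum>j<K. mpow K A 0 i j * y j) = (\<Sum>j<K. if i = j then y j else 0)"
    by (intro sum.cong) auto
  then show ?case using 0 by simp
next
  case (Suc n)
  have "(\<Sum>j<K. mpow K A (Suc n) i j * y j) = (\<Sum>l<K. mpow K A n i l * (lam * y l))"
    unfolding mpow_vec_Suc_right using eig by (intro sum.cong) auto
  also have "\<dots> = lam * (\<Sum>l<K. mpow K A n i l * y l)"
    by (simp add: sum_distrib_left mult_ac)
  finally show ?case using Suc by simp
qed

section \<open>Perron vectors of nonnegative irreducible matrices\<close>

text \<open>Collatz--Wielandt approach: among probability vectors \<open>y\<close> and reals \<open>lam\<close> with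
  \<open>lam y \<le> A y\<close> componentwise there is one with maximal \<open>lam\<close>; irreducibility then forces
  \<open>A y = lam y\<close> and \<open>y > 0\<close>.\<close>

definition prob_vec :: "nat \<Rightarrow> (nat \<Rightarrow> real) \<Rightarrow> bool" where
  "prob_vec K y \<longleftrightarrow> (\<forall>i<K. 0 \<le> y i) \<and> (\<Sum>i<K. y i) = 1"

definition collatz_wielandt :: "nat \<Rightarrow> (nat \<Rightarrow> nat \<Rightarrow> real) \<Rightarrow> real \<Rightarrow> (nat \<Rightarrow> real) \<Rightarrow> bool" where
  "collatz_wielandt K A lam y \<longleftrightarrow> (\<forall>i<K. lam * y i \<le> (\<Sum>j<K. A i j * y j))"

lemma prob_vec_le_one:
  assumes "prob_vec K y" "i < K" shows "y i \<le> 1"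
proof -
  have "y i \<le> (\<Sum>i<K. y i)" using assms by (intro member_le_sum) (auto simp: prob_vec_def)
  then show ?thesis using assms(1) by (simp add: prob_vec_def)
qed

lemma prob_vec_pos_entry:
  assumes "prob_vec K y" obtains j where "j < K" "0 < y j"
proof -
  have "0 < (\<Sum>i<K. y i)" using assms by (simp add: prob_vec_def)
  then obtain j where "j \<in> {..<K}" "0 < y j" by (rule sum_pos_obtain)
  then show ?thesis using that by simp
qed

lemma coordinatewise_convergent_subseq:
  fixes y :: "nat \<Rightarrow> nat \<Rightarrow> real"
  assumes bnd: "\<forall>n. \<forall>i<K. \<bar>y n i\<bar> \<le> B"
  obtains r where "strict_mono r" "\<forall>i<K. convergent (\<lambda>n. y (r n) i)"
proof -
  have "\<exists>r. strict_mono r \<and> (\<forall>i<m. convergent (\<lambda>n. y (r n) i))" if "m \<le> K" for m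
    using that
  proof (induction m)
    case 0
    show ?case by (intro exI[of _ id]) (auto simp: strict_mono_def)
  next
    case (Suc m)
    then obtain r where r: "strict_mono r" "\<forall>i<m. convergent (\<lambda>n. y (r n) i)" by auto
    have "bounded (range (\<lambda>n. y (r n) m))"
      using bnd Suc.prems by (intro boundedI[of _ B]) auto
    from bounded_imp_convergent_subsequence[OF this] obtain l r2
      where r2: "strict_mono r2" "((\<lambda>n. y (r n) m) \<circ> r2) \<longlonglongrightarrow> l" by blast
    have "convergent (\<lambda>n. y ((r \<circ> r2) n) i)" if "i < Suc m" for i
    proof (cases "i = m")
      case True
      then show ?thesis using r2(2) by (auto simp: convergent_def o_def)
    next
      case False
      then have "convergent (\<lambda>n. y (r n) i)" using r(2) that by auto
      from convergent_subseq_convergent[OF this r2(1)] show ?thesis by (simp add: o_def)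
    qed
    with strict_mono_o[OF r(1) r2(1)] show ?case by blast
  qed
  then show ?thesis using that by blast
qed

lemma collatz_wielandt_limit:
  assumes y: "\<forall>i<K. (\<lambda>n. y n i) \<longlonglongrightarrow> yl i" and lam: "lamn \<longlonglongrightarrow> lam"
    and cw: "\<forall>n. prob_vec K (y n) \<and> collatz_wielandt K A (lamn n) (y n)"
  shows "prob_vec K yl \<and> collatz_wielandt K A lam yl"
proof (intro conjI)
  have "(\<lambda>n. \<Sum>i<K. y n i) \<longlonglongrightarrow> (\<Sum>i<K. yl i)"
    using y by (intro tendsto_sum) auto
  moreover have "(\<lambda>n. \<Sum>i<K. y n i) = (\<lambda>n. 1)"
    using cw by (auto simp: prob_vec_def)
  ultimately have "(\<Sum>i<K. yl i) = 1"
    using LIMSEQ_unique tendsto_const by metis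
  moreover have "0 \<le> yl i" if "i < K" for i
    using y that cw by (intro LIMSEQ_le_const[of "\<lambda>n. y n i"]) (auto simp: prob_vec_def)
  ultimately show "prob_vec K yl" by (simp add: prob_vec_def)
  show "collatz_wielandt K A lam yl"
    unfolding collatz_wielandt_def
  proof (intro allI impI)
    fix i assume i: "i < K"
    show "lam * yl i \<le> (\<Sum>j<K. A i j * yl j)"
    proof (rule LIMSEQ_le)
      show "(\<lambda>n. lamn n * y n i) \<longlonglongrightarrow> lam * yl i"
        using lam y i by (intro tendsto_mult) auto
      show "(\<lambda>n. \<Sum>j<K. A i j * y n j) \<longlonglongrightarrow> (\<Sum>j<K. A i j * yl j)"
        using y by (intro tendsto_sum tendsto_mult tendsto_const) auto
      show "\<exists>N. \<forall>n\<ge>N. lamn n * y n i \<le> (\<Sum>j<K. A i j * y n j)"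
        using cw i by (auto simp: collatz_wielandt_def)
    qed
  qed
qed

lemma collatz_wielandt_closed:
  assumes cw: "\<forall>n. prob_vec K (y n) \<and> collatz_wielandt K A (lamn n) (y n)"
    and lam: "lamn \<longlonglongrightarrow> lam"
  obtains yl where "prob_vec K yl" "collatz_wielandt K A lam yl"
proof -
  have "\<bar>y n i\<bar> \<le> 1" if "i < K" for n i
    using cw prob_vec_le_one[of K "y n" i] that by (simp add: prob_vec_def)
  then have "\<forall>n. \<forall>i<K. \<bar>y n i\<bar> \<le> 1" by blast
  then obtain r where r: "strict_mono r" "\<forall>i<K. convergent (\<lambda>n. y (r n) i)"
    by (rule coordinatewise_convergent_subseq)
  define yl where "yl i = lim (\<lambda>n. y (r n) i)" for i
  have "\<forall>i<K. (\<lambda>n. y (r n) i) \<longlonglongrightarrow> yl i"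
    using r(2) by (simp add: yl_def convergent_LIMSEQ_iff)
  moreover have "(\<lambda>n. lamn (r n)) \<longlonglongrightarrow> lam"
    using LIMSEQ_subseq_LIMSEQ[OF lam r(1)] by (simp add: o_def)
  ultimately have "prob_vec K yl \<and> collatz_wielandt K A lam yl"
    using cw by (intro collatz_wielandt_limit[where y = "\<lambda>n. y (r n)"]) auto
  then show ?thesis using that by blast
qed

lemma collatz_wielandt_bounded:
  assumes nn: "\<forall>i<K. \<forall>j<K. 0 \<le> A i j" and y: "prob_vec K y" and cw: "collatz_wielandt K A lam y"
  shows "lam \<le> (\<Sum>i<K. \<Sum>j<K. A i j)"
proof -
  have "lam = (\<Sum>i<K. lam * y i)" using y by (simp add: prob_vec_def sum_distrib_left[symmetric])
  also have "\<dots> \<le> (\<Sum>i<K. \<Sum>j<K. A i j * y j)" using cw by (intro sum_mono) (auto simp: collatz_wielandt_def)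
  also have "\<dots> \<le> (\<Sum>i<K. \<Sum>j<K. A i j)"
    using nn prob_vec_le_one[OF y] y by (intro sum_mono mult_left_le) (auto simp: prob_vec_def)
  finally show ?thesis .
qed

lemma collatz_wielandt_max:
  assumes K: "K \<ge> 1" and nn: "\<forall>i<K. \<forall>j<K. 0 \<le> A i j"
  obtains lam y where "prob_vec K y" "collatz_wielandt K A lam y"
    "\<And>lam' y'. prob_vec K y' \<Longrightarrow> collatz_wielandt K A lam' y' \<Longrightarrow> lam' \<le> lam"
proof -
  define L where "L = {lam. \<exists>y. prob_vec K y \<and> collatz_wielandt K A lam y}"
  define ls where "ls = Sup L"
  have "prob_vec K (\<lambda>i. if i = 0 then 1 else 0)" using K by (auto simp: prob_vec_def)
  moreover have "collatz_wielandt K A 0 y" if "prob_vec K y" for y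
    using nn that by (auto simp: collatz_wielandt_def prob_vec_def intro!: sum_nonneg)
  ultimately have "0 \<in> L" by (auto simp: L_def)
  have bdd: "bdd_above L"
    using collatz_wielandt_bounded[OF nn] by (auto simp: bdd_above_def L_def)
  have ls_ge: "lam \<le> ls" if "lam \<in> L" for lam using cSup_upper[OF that bdd] by (simp add: ls_def)
  have "\<exists>lam y. prob_vec K y \<and> collatz_wielandt K A lam y \<and> ls - inverse (real (Suc n)) < lam"
    for n
  proof -
    have "ls - inverse (real (Suc n)) < ls" by simp
    then obtain lam where "lam \<in> L" "ls - inverse (real (Suc n)) < lam"
      using less_cSupE[of _ L] \<open>0 \<in> L\<close> unfolding ls_def by blast
    then show ?thesis by (auto simp: L_def)
  qed
  then obtain lamn y where lamn: "\<forall>n. prob_vec K (y n) \<and> collatz_wielandt K A (lamn n) (y n)"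
    "\<forall>n. ls - inverse (real (Suc n)) < lamn n"
    by metis
  have "lamn \<longlonglongrightarrow> ls"
  proof (rule tendsto_sandwich[of "\<lambda>n. ls - inverse (real (Suc n))" _ _ "\<lambda>n. ls"])
    show "\<forall>\<^sub>F n in sequentially. ls - inverse (real (Suc n)) \<le> lamn n"
      using lamn(2) less_imp_le by (intro always_eventually) blast
    show "\<forall>\<^sub>F n in sequentially. lamn n \<le> ls"
      using lamn(1) ls_ge by (intro always_eventually) (auto simp: L_def)
    show "(\<lambda>n. ls - inverse (real (Suc n))) \<longlonglongrightarrow> ls"
      using tendsto_diff[OF tendsto_const LIMSEQ_inverse_real_of_nat, of ls] by simp
  qed simp
  with lamn(1) obtain yl where "prob_vec K yl" "collatz_wielandt K A ls yl"
    by (rule collatz_wielandt_closed)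
  with ls_ge show ?thesis using that unfolding L_def by blast
qed

lemma irreducible_reach:
  assumes nn: "\<forall>i<K. \<forall>j<K. 0 \<le> A i j" and irr: "irreducible_mat K A"
  obtains N where "\<And>i x j0. i < K \<Longrightarrow> \<forall>j<K. 0 \<le> x j \<Longrightarrow> j0 < K \<Longrightarrow> 0 < x j0 \<Longrightarrow>
      0 < (\<Sum>k\<le>N. \<Sum>j<K. mpow K A k i j * x j)"
proof -
  define n where "n i j = (SOME n. n > 0 \<and> mpow K A n i j > 0)" for i j
  have n: "0 < mpow K A (n i j) i j" if "i < K" "j < K" for i j
  proof -
    have "\<exists>n. n > 0 \<and> mpow K A n i j > 0" using irr that by (auto simp: irreducible_mat_def)
    then show ?thesis unfolding n_def by (metis (mono_tags, lifting) someI_ex)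
  qed
  define N where "N = (\<Sum>i<K. \<Sum>j<K. n i j)"
  have n_le: "n i j \<le> N" if "i < K" "j < K" for i j
  proof -
    have "n i j \<le> (\<Sum>j<K. n i j)" using that by (intro member_le_sum) auto
    also have "\<dots> \<le> N" unfolding N_def using that by (intro member_le_sum) auto
    finally show ?thesis .
  qed
  have "0 < (\<Sum>k\<le>N. \<Sum>j<K. mpow K A k i j * x j)"
    if i: "i < K" and x: "\<forall>j<K. 0 \<le> x j" and j0: "j0 < K" "0 < x j0" for i x j0
  proof -
    have terms_nn: "0 \<le> mpow K A k i j * x j" if "j < K" for k j
      using mpow_nonneg[OF nn i that] x that by simp
    have "0 < mpow K A (n i j0) i j0 * x j0" using n[OF i j0(1)] j0(2) by simp
    also have "\<dots> \<le> (\<Sum>j<K. mpow K A (n i j0) i j * x j)"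
      using terms_nn j0 by (intro member_le_sum) auto
    also have "\<dots> \<le> (\<Sum>k\<le>N. \<Sum>j<K. mpow K A k i j * x j)"
      using n_le[OF i j0(1)] terms_nn by (intro member_le_sum sum_nonneg) auto
    finally show ?thesis .
  qed
  then show ?thesis using that by blast
qed

lemma strict_collatz_wielandt_improve:
  assumes K: "K \<ge> 1" and z: "\<forall>i<K. 0 < z i" and strict: "\<forall>i<K. lam * z i < (\<Sum>j<K. A i j * z j)"
  obtains \<delta> y where "0 < \<delta>" "prob_vec K y" "collatz_wielandt K A (lam + \<delta>) y"
proof -
  define u where "u i = (\<Sum>j<K. A i j * z j) - lam * z i" for i
  define \<delta> where "\<delta> = Min ((\<lambda>i. u i / z i) ` {..<K})"
  have fin: "finite ((\<lambda>i. u i / z i) ` {..<K})" and ne: "(\<lambda>i. u i / z i) ` {..<K} \<noteq> {}"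
    using K by (auto simp: lessThan_empty_iff)
  have "0 < \<delta>" unfolding \<delta>_def using Min_gr_iff[OF fin ne] strict z by (auto simp: u_def)
  have "\<delta> * z i \<le> u i" if "i < K" for i
    using Min_le[OF fin, of "u i / z i"] z that by (auto simp: \<delta>_def le_divide_eq)
  then have improved: "(lam + \<delta>) * z i \<le> (\<Sum>j<K. A i j * z j)" if "i < K" for i
    using that by (fastforce simp: u_def algebra_simps)
  define Z where "Z = (\<Sum>i<K. z i)"
  have "0 < Z" unfolding Z_def using K z by (intro sum_pos) (auto simp: lessThan_empty_iff)
  have "prob_vec K (\<lambda>i. z i / Z)"
    using z \<open>0 < Z\<close> by (auto simp: prob_vec_def Z_def sum_divide_distrib[symmetric] less_imp_le)
  moreover have "(lam + \<delta>) * (z i / Z) \<le> (\<Sum>j<K. A i j * (z j / Z))" if "i < K" for i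
  proof -
    have "(lam + \<delta>) * (z i / Z) = (lam + \<delta>) * z i / Z" by simp
    also have "\<dots> \<le> (\<Sum>j<K. A i j * z j) / Z"
      using improved[OF that] \<open>0 < Z\<close> by (simp add: divide_right_mono)
    finally show ?thesis by (simp add: sum_divide_distrib)
  qed
  then have "collatz_wielandt K A (lam + \<delta>) (\<lambda>i. z i / Z)"
    by (simp add: collatz_wielandt_def)
  ultimately show ?thesis using that \<open>0 < \<delta>\<close> by blast
qed

text \<open>A maximiser of the Collatz--Wielandt value is an eigenvector: otherwise
  \<open>z = \<Sum>k\<le>N. A^k y\<close> would satisfy \<open>lam z < A z\<close> strictly.\<close>
lemma maximal_collatz_wielandt_eigen:
  assumes K: "K \<ge> 1" and nn: "\<forall>i<K. \<forall>j<K. 0 \<le> A i j" and irr: "irreducible_mat K A"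
    and y: "prob_vec K y" and cw: "collatz_wielandt K A lam y"
    and max: "\<And>lam' y'. prob_vec K y' \<Longrightarrow> collatz_wielandt K A lam' y' \<Longrightarrow> lam' \<le> lam"
  shows "\<forall>i<K. (\<Sum>j<K. A i j * y j) = lam * y i"
proof (rule ccontr)
  assume "\<not> ?thesis"
  then obtain i0 where i0: "i0 < K" "(\<Sum>j<K. A i0 j * y j) \<noteq> lam * y i0" by auto
  obtain N where reach: "\<And>i x j0. i < K \<Longrightarrow> \<forall>j<K. 0 \<le> x j \<Longrightarrow> j0 < K \<Longrightarrow> 0 < x j0 \<Longrightarrow>
      0 < (\<Sum>k\<le>N. \<Sum>j<K. mpow K A k i j * x j)"
    using irreducible_reach[OF nn irr] by blast
  define w where "w i = (\<Sum>j<K. A i j * y j) - lam * y i" for i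
  define z where "z i = (\<Sum>k\<le>N. \<Sum>j<K. mpow K A k i j * y j)" for i
  have w_nn: "\<forall>j<K. 0 \<le> w j" using cw by (auto simp: w_def collatz_wielandt_def)
  have "0 < w i0" using cw i0 by (auto simp: w_def collatz_wielandt_def order_le_less)
  obtain j1 where j1: "j1 < K" "0 < y j1" using y by (rule prob_vec_pos_entry)
  have z_pos: "\<forall>i<K. 0 < z i"
    using reach[of _ y j1] j1 y unfolding z_def prob_vec_def by blast
  have "lam * z i < (\<Sum>j<K. A i j * z j)" if i: "i < K" for i
  proof -
    have Az: "(\<Sum>j<K. A i j * z j) = (\<Sum>k\<le>N. \<Sum>j<K. mpow K A (Suc k) i j * y j)"
      unfolding z_def mpow_vec_Suc_left[OF i]
      by (simp add: sum_distrib_left) (rule sum.swap)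
    have "(\<Sum>k\<le>N. \<Sum>j<K. mpow K A k i j * w j) =
          (\<Sum>k\<le>N. \<Sum>j<K. mpow K A (Suc k) i j * y j) - lam * z i"
      unfolding w_def z_def mpow_vec_Suc_right
      by (simp add: right_diff_distrib sum_subtractf sum_distrib_left mult.left_commute)
    moreover have "0 < (\<Sum>k\<le>N. \<Sum>j<K. mpow K A k i j * w j)"
      using reach[OF i w_nn i0(1) \<open>0 < w i0\<close>] .
    ultimately show ?thesis using Az by simp
  qed
  then obtain \<delta> y' where "0 < \<delta>" "prob_vec K y'" "collatz_wielandt K A (lam + \<delta>) y'"
    using strict_collatz_wielandt_improve[OF K z_pos] by blast
  with max[of y' "lam + \<delta>"] show False by simp
qed

lemma nonneg_eigenvector_pos:
  assumes nn: "\<forall>i<K. \<forall>j<K. 0 \<le> A i j" and irr: "irreducible_mat K A"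
    and y_nn: "\<forall>j<K. 0 \<le> y j" and j0: "j0 < K" "0 < y j0"
    and eig: "\<forall>i<K. (\<Sum>j<K. A i j * y j) = lam * y i"
  shows "\<forall>i<K. 0 < y i"
proof (intro allI impI)
  fix i assume i: "i < K"
  obtain N where reach: "\<And>i x j0. i < K \<Longrightarrow> \<forall>j<K. 0 \<le> x j \<Longrightarrow> j0 < K \<Longrightarrow> 0 < x j0 \<Longrightarrow>
      0 < (\<Sum>k\<le>N. \<Sum>j<K. mpow K A k i j * x j)"
    using irreducible_reach[OF nn irr] by blast
  have "(\<Sum>k\<le>N. \<Sum>j<K. mpow K A k i j * y j) = (\<Sum>k\<le>N. lam ^ k) * y i"
    using mpow_eigenvector[OF eig i] by (simp add: sum_distrib_right)
  with reach[OF i y_nn j0] have "0 < (\<Sum>k\<le>N. lam ^ k) * y i" by simp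
  then show "0 < y i" using y_nn i by (auto simp: zero_less_mult_iff)
qed

lemma perron_vector:
  assumes K: "K \<ge> 1" and nn: "\<forall>i<K. \<forall>j<K. 0 \<le> A i j" and irr: "irreducible_mat K A"
  obtains lam \<psi> where "\<forall>i<K. 0 < \<psi> i" "\<forall>i<K. (\<Sum>j<K. A i j * \<psi> j) = lam * \<psi> i"
proof -
  obtain y lam where y: "prob_vec K y" "collatz_wielandt K A lam y"
    "\<And>lam' y'. prob_vec K y' \<Longrightarrow> collatz_wielandt K A lam' y' \<Longrightarrow> lam' \<le> lam"
    using collatz_wielandt_max[OF K nn] by metis
  have eig: "\<forall>i<K. (\<Sum>j<K. A i j * y j) = lam * y i"
    using maximal_collatz_wielandt_eigen[OF K nn irr y] .
  obtain j0 where j0: "j0 < K" "0 < y j0" using y(1) by (rule prob_vec_pos_entry)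
  have "\<forall>j<K. 0 \<le> y j" using y(1) by (simp add: prob_vec_def)
  from nonneg_eigenvector_pos[OF nn irr this j0 eig] eig show ?thesis by (rule that)
qed

section \<open>Irreducibility of the two-generation mean matrix\<close>

text \<open>For an irreducible aperiodic matrix, any two states are joined by a path of even
  length: an odd cycle at \<open>i\<close> fixes the parity of a path from \<open>i\<close> to \<open>j\<close>.\<close>
lemma even_path:
  assumes nn: "\<forall>i<K. \<forall>j<K. 0 \<le> d i j" and irr: "irreducible_mat K d"
    and ap: "aperiodic_mat K d" and ij: "i < K" "j < K"
  obtains n where "n > 0" "mpow K d (2 * n) i j > 0"
proof -
  obtain c where c: "odd c" "mpow K d c i i > 0"
  proof (rule ccontr)
    assume "\<not> thesis"
    then have "\<forall>c. mpow K d c i i > 0 \<longrightarrow> even c" using that by blast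
    then have "2 dvd Gcd {n. n > 0 \<and> mpow K d n i i > 0}" by (intro Gcd_greatest) auto
    with ap ij show False by (auto simp: aperiodic_mat_def)
  qed
  obtain a where a: "a > 0" "mpow K d a i j > 0" using irr ij by (auto simp: irreducible_mat_def)
  show ?thesis
  proof (cases "even a")
    case True
    then obtain n where "a = 2 * n" by blast
    with a show ?thesis using that by auto
  next
    case False
    then have "even (c + a)" using c(1) by simp
    then obtain n where n: "c + a = 2 * n" by (rule evenE)
    have "0 < mpow K d c i i * mpow K d a i j" using c a by simp
    also have "\<dots> \<le> mpow K d (c + a) i j" by (rule mpow_mult_le) (use nn ij in auto)
    finally have "0 < mpow K d (2 * n) i j" by (simp only: n)
    moreover have "0 < n" using n a(1) by simp
    ultimately show ?thesis by (rule that[rotated])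
  qed
qed

lemma A2_nonneg:
  assumes nn: "\<forall>i<K. \<forall>j<K. 0 \<le> d i j" and m1: "\<forall>i<K. 0 < m1 i" and m2: "\<forall>i<K. 0 < m2 i"
  shows "\<forall>i<K. \<forall>j<K. 0 \<le> A2 K d m1 m2 i j"
  using assms unfolding A2_def by (auto intro!: sum_nonneg mult_nonneg_nonneg simp: order_less_imp_le)

lemma A2_pos_of_two_step:
  assumes nn: "\<forall>i<K. \<forall>j<K. 0 \<le> d i j" and m1: "\<forall>i<K. 0 < m1 i" and m2: "\<forall>i<K. 0 < m2 i"
    and kj: "k < K" "j < K" and pos: "0 < mpow K d 2 k j"
  shows "0 < A2 K d m1 m2 k j"
proof -
  have "mpow K d 2 k j = (\<Sum>q<K. d k q * d q j)"
    using mpow_one[OF kj(1), of d] by (simp add: numeral_2_eq_2 del: mpow.simps) (simp add: mpow_one[OF kj(1)])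
  with pos obtain q where q: "q \<in> {..<K}" "0 < d k q * d q j" by (auto elim: sum_pos_obtain)
  moreover have "0 \<le> d k q" "0 \<le> d q j" using nn kj q(1) by auto
  ultimately have "0 < d k q" "0 < d q j" by (auto simp: zero_less_mult_iff)
  with m1 m2 kj q(1) have "0 < m1 k * d k q * m2 q * d q j" by simp
  also have "\<dots> \<le> A2 K d m1 m2 k j" unfolding A2_def
    using nn m1 m2 kj q(1) by (intro member_le_sum) (auto intro!: mult_nonneg_nonneg simp: order_less_imp_le)
  finally show ?thesis .
qed

lemma A2_irreducible:
  assumes nn: "\<forall>i<K. \<forall>j<K. 0 \<le> d i j" and irr: "irreducible_mat K d"
    and ap: "aperiodic_mat K d" and m1: "\<forall>i<K. 0 < m1 i" and m2: "\<forall>i<K. 0 < m2 i"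
  shows "irreducible_mat K (A2 K d m1 m2)"
  unfolding irreducible_mat_def
proof (intro allI impI)
  fix i j assume ij: "i < K" "j < K"
  obtain n where n: "n > 0" "mpow K d (2 * n) i j > 0" by (rule even_path[OF nn irr ap ij])
  have "0 < mpow K (mpow K d 2) n i j" using n(2) mpow_mult[OF ij(2), of d 2 n i] by simp
  moreover have "\<forall>i<K. \<forall>j<K. 0 \<le> mpow K d 2 i j" using mpow_nonneg[OF nn] by blast
  moreover have "\<forall>i<K. \<forall>j<K. 0 < mpow K d 2 i j \<longrightarrow> 0 < A2 K d m1 m2 i j"
    using A2_pos_of_two_step[OF nn m1 m2] by blast
  ultimately have "0 < mpow K (A2 K d m1 m2) n i j"
    using mpow_pos_mono[OF A2_nonneg[OF nn m1 m2] _ _ ij] by blast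
  with n(1) show "\<exists>n>0. 0 < mpow K (A2 K d m1 m2) n i j" by blast
qed

section \<open>Identification of the Perron root\<close>

text \<open>Pairing a positive left eigenvector with a right eigenvector bounds the modulus of every
  eigenvalue by the left eigenvalue.\<close>
lemma eigenvalue_le_left_eigenvalue:
  fixes A :: "nat \<Rightarrow> nat \<Rightarrow> real"
  assumes nn: "\<forall>i<K. \<forall>j<K. 0 \<le> A i j"
    and t: "\<forall>i<K. 0 < t i" and teq: "\<forall>j<K. (\<Sum>i<K. A i j * t i) = \<mu> * t j"
    and eig: "is_eigenvalue K A lam"
  shows "cmod lam \<le> \<mu>"
proof -
  obtain x where x: "\<exists>i<K. x i \<noteq> 0" "\<forall>i<K. (\<Sum>j<K. complex_of_real (A i j) * x j) = lam * x i"
    using eig by (auto simp: is_eigenvalue_def)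
  have ineq: "cmod lam * cmod (x i) \<le> (\<Sum>j<K. A i j * cmod (x j))" if "i < K" for i
  proof -
    have "cmod lam * cmod (x i) = cmod (\<Sum>j<K. complex_of_real (A i j) * x j)"
      using x(2) that by (simp add: norm_mult)
    also have "\<dots> \<le> (\<Sum>j<K. cmod (complex_of_real (A i j) * x j))" by (rule norm_sum)
    also have "\<dots> = (\<Sum>j<K. A i j * cmod (x j))" using nn that by (intro sum.cong) (auto simp: norm_mult)
    finally show ?thesis .
  qed
  have "cmod lam * (\<Sum>i<K. t i * cmod (x i)) = (\<Sum>i<K. t i * (cmod lam * cmod (x i)))"
    by (simp add: sum_distrib_left mult_ac)
  also have "\<dots> \<le> (\<Sum>i<K. t i * (\<Sum>j<K. A i j * cmod (x j)))"
    using ineq t by (intro sum_mono mult_left_mono) (auto intro: less_imp_le)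
  also have "\<dots> = (\<Sum>j<K. cmod (x j) * (\<Sum>i<K. A i j * t i))"
    by (simp add: sum_distrib_left mult_ac, rule sum.swap)
  also have "\<dots> = \<mu> * (\<Sum>i<K. t i * cmod (x i))" using teq by (simp add: sum_distrib_left mult_ac)
  finally have "cmod lam * (\<Sum>i<K. t i * cmod (x i)) \<le> \<mu> * (\<Sum>i<K. t i * cmod (x i))" .
  moreover have "0 < (\<Sum>i<K. t i * cmod (x i))"
  proof -
    obtain i0 where "i0 < K" "x i0 \<noteq> 0" using x(1) by auto
    then have "0 < t i0 * cmod (x i0)" using t by simp
    also have "\<dots> \<le> (\<Sum>i<K. t i * cmod (x i))"
      using t \<open>i0 < K\<close> by (intro member_le_sum) (auto intro: less_imp_le)
    finally show ?thesis .
  qed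
  ultimately show ?thesis by simp
qed

lemma left_right_eigenvalue_eq:
  fixes A :: "nat \<Rightarrow> nat \<Rightarrow> real"
  assumes K: "K \<ge> 1"
    and \<psi>: "\<forall>i<K. 0 < \<psi> i" and \<psi>eq: "\<forall>i<K. (\<Sum>j<K. A i j * \<psi> j) = \<mu> * \<psi> i"
    and t: "\<forall>i<K. 0 < t i" and teq: "\<forall>j<K. (\<Sum>i<K. A i j * t i) = \<mu>' * t j"
  shows "\<mu> = \<mu>'"
proof -
  have "\<mu> * (\<Sum>i<K. t i * \<psi> i) = (\<Sum>i<K. t i * (\<Sum>j<K. A i j * \<psi> j))"
    using \<psi>eq by (simp add: sum_distrib_left mult_ac)
  also have "\<dots> = (\<Sum>j<K. \<psi> j * (\<Sum>i<K. A i j * t i))"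
    by (simp add: sum_distrib_left mult_ac, rule sum.swap)
  also have "\<dots> = \<mu>' * (\<Sum>j<K. t j * \<psi> j)" using teq by (simp add: sum_distrib_left mult_ac)
  finally have "\<mu> * (\<Sum>i<K. t i * \<psi> i) = \<mu>' * (\<Sum>i<K. t i * \<psi> i)" .
  moreover have "0 < (\<Sum>i<K. t i * \<psi> i)"
    using t \<psi> K by (intro sum_pos) (auto simp: lessThan_empty_iff)
  ultimately show ?thesis by simp
qed

lemma perron_root_of_positive_eigenvectors:
  fixes A :: "nat \<Rightarrow> nat \<Rightarrow> real"
  assumes K: "K \<ge> 1" and nn: "\<forall>i<K. \<forall>j<K. 0 \<le> A i j" and per: "perron_eigenvalue K A r"
    and \<psi>: "\<forall>i<K. 0 < \<psi> i" and \<psi>eq: "\<forall>i<K. (\<Sum>j<K. A i j * \<psi> j) = \<mu> * \<psi> i"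
    and t: "\<forall>i<K. 0 < t i" and teq: "\<forall>j<K. (\<Sum>i<K. A i j * t i) = \<mu>' * t j"
  shows "\<mu> = r" "\<mu>' = r"
proof -
  have "is_eigenvalue K A (complex_of_real \<mu>)" unfolding is_eigenvalue_def
  proof (intro exI[of _ "\<lambda>i. complex_of_real (\<psi> i)"] conjI allI impI)
    show "\<exists>i<K. complex_of_real (\<psi> i) \<noteq> 0" using \<psi> K by (intro exI[of _ 0]) auto
    show "(\<Sum>j<K. complex_of_real (A i j) * complex_of_real (\<psi> j)) = complex_of_real \<mu> * complex_of_real (\<psi> i)"
      if "i < K" for i
      using \<psi>eq that by (simp flip: of_real_mult of_real_sum)
  qed
  with per have "\<mu> \<le> r" by (auto simp: perron_eigenvalue_def)
  moreover have "cmod (complex_of_real r) \<le> \<mu>'"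
    using eigenvalue_le_left_eigenvalue[OF nn t teq] per unfolding perron_eigenvalue_def by blast
  then have "r \<le> \<mu>'" by simp
  moreover have "\<mu> = \<mu>'" by (rule left_right_eigenvalue_eq[OF K \<psi> \<psi>eq t teq])
  ultimately show "\<mu> = r" "\<mu>' = r" by auto
qed

lemma A2_perron_vectors:
  assumes K: "K \<ge> 1" and nn: "\<forall>i<K. \<forall>j<K. 0 \<le> d i j" and irr: "irreducible_mat K d"
    and ap: "aperiodic_mat K d" and m1: "\<forall>i<K. 0 < m1 i" and m2: "\<forall>i<K. 0 < m2 i"
    and per: "perron_eigenvalue K (A2 K d m1 m2) r"
  obtains t \<psi> where "\<forall>i<K. 0 < t i" "\<forall>j<K. (\<Sum>i<K. A2 K d m1 m2 i j * t i) = r * t j"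
    "\<forall>i<K. 0 < \<psi> i" "\<forall>i<K. (\<Sum>j<K. A2 K d m1 m2 i j * \<psi> j) = r * \<psi> i"
proof -
  let ?A = "A2 K d m1 m2"
  have Ann: "\<forall>i<K. \<forall>j<K. 0 \<le> ?A i j" by (rule A2_nonneg[OF nn m1 m2])
  have Airr: "irreducible_mat K ?A" by (rule A2_irreducible[OF nn irr ap m1 m2])
  obtain \<mu> \<psi> where \<psi>: "\<forall>i<K. 0 < \<psi> i" "\<forall>i<K. (\<Sum>j<K. ?A i j * \<psi> j) = \<mu> * \<psi> i"
    using perron_vector[OF K Ann Airr] by metis
  obtain \<mu>' t where t: "\<forall>i<K. 0 < t i" "\<forall>i<K. (\<Sum>j<K. ?A j i * t j) = \<mu>' * t i"
    using perron_vector[OF K _ irreducible_transpose[OF Airr]] Ann by metis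
  have "\<mu> = r" "\<mu>' = r"
    using perron_root_of_positive_eigenvectors[OF K Ann per \<psi>] t by (auto simp: mult.commute)
  with \<psi> t show ?thesis using that by auto
qed

section \<open>A Donsker--Varadhan inequality\<close>

lemma jensen_ln:
  fixes a x :: "'b \<Rightarrow> real"
  assumes fin: "finite A" and a: "\<forall>i\<in>A. 0 \<le> a i" and s: "(\<Sum>i\<in>A. a i) = 1"
    and x: "\<forall>i\<in>A. 0 < x i"
  shows "(\<Sum>i\<in>A. a i * ln (x i)) \<le> ln (\<Sum>i\<in>A. a i * x i)"
proof -
  have "A \<noteq> {}" using s by auto
  from concave_on_sum[OF fin this ln_concave s] a x show ?thesis by simp
qed

text \<open>Pointwise step: if \<open>v\<close> is a positive left eigenvector of \<open>M\<close> for \<open>r\<close>, then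
  \<open>Q(E,E') = v E' M E' E / (r v E)\<close> is stochastic, and Jensen's inequality for \<open>Q\<close> applied to
  \<open>g = w/v\<close> bounds \<open>log (r w E / (w M) E)\<close>.\<close>
lemma dv_pointwise:
  fixes S :: "'a set" and M :: "'a \<Rightarrow> 'a \<Rightarrow> real"
  assumes fin: "finite S" and Mnn: "\<forall>E\<in>S. \<forall>E'\<in>S. 0 \<le> M E' E" and vpos: "\<forall>E\<in>S. 0 < v E"
    and r: "r > 0" and veq: "\<forall>E\<in>S. (\<Sum>E'\<in>S. v E' * M E' E) = r * v E"
    and wpos: "\<forall>E\<in>S. 0 < w E" and E: "E \<in> S"
  shows "0 < (\<Sum>E'\<in>S. w E' * M E' E)"
    and "ln (r * w E / (\<Sum>E'\<in>S. w E' * M E' E))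
         \<le> ln (w E / v E) - (\<Sum>E'\<in>S. v E' * M E' E / (r * v E) * ln (w E' / v E'))"
proof -
  define Q where "Q E' = v E' * M E' E / (r * v E)" for E'
  define g where "g E' = w E' / v E'" for E'
  define P where "P = (\<Sum>E'\<in>S. w E' * M E' E)"
  have vE: "0 < v E" using vpos E by blast
  have gpos: "\<forall>E'\<in>S. 0 < g E'" using vpos wpos by (simp add: g_def)
  have "0 \<le> Q E'" if "E' \<in> S" for E'
    unfolding Q_def using vpos Mnn E r that
    by (metis divide_nonneg_pos less_imp_le mult_nonneg_nonneg mult_pos_pos)
  then have Qnn: "\<forall>E'\<in>S. 0 \<le> Q E'" by blast
  have Qsum: "(\<Sum>E'\<in>S. Q E') = 1"
    using veq E vE r by (simp add: Q_def sum_divide_distrib[symmetric])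
  have QgP: "(\<Sum>E'\<in>S. Q E' * g E') = P / (r * v E)"
    unfolding P_def sum_divide_distrib
    using vpos by (intro sum.cong) (auto simp: Q_def g_def)
  have "0 < sum Q S" using Qsum by simp
  then obtain E0 where E0: "E0 \<in> S" "0 < Q E0" by (rule sum_pos_obtain)
  have "0 < (\<Sum>E'\<in>S. Q E' * g E')"
    using fin E0 gpos Qnn by (intro sum_pos2[of S E0]) (auto intro: mult_nonneg_nonneg less_imp_le)
  then show Ppos: "0 < (\<Sum>E'\<in>S. w E' * M E' E)"
    using QgP mult_pos_pos[OF r vE] by (simp add: P_def zero_less_divide_iff)
  have "(\<Sum>E'\<in>S. Q E' * ln (g E')) \<le> ln (P / (r * v E))"
    using jensen_ln[OF fin Qnn Qsum gpos] QgP by simp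
  moreover have "ln (r * w E / P) = ln (g E) - ln (P / (r * v E))"
    using wpos E vE r Ppos by (simp add: P_def g_def ln_div ln_mult less_imp_neq[symmetric])
  ultimately show "ln (r * w E / (\<Sum>E'\<in>S. w E' * M E' E))
         \<le> ln (w E / v E) - (\<Sum>E'\<in>S. v E' * M E' E / (r * v E) * ln (w E' / v E'))"
    by (simp add: P_def Q_def g_def)
qed

lemma donsker_varadhan_inequality:
  fixes S :: "'a set" and M :: "'a \<Rightarrow> 'a \<Rightarrow> real"
  assumes fin: "finite S" and Mnn: "\<forall>E\<in>S. \<forall>E'\<in>S. 0 \<le> M E' E" and vpos: "\<forall>E\<in>S. 0 < v E"
    and unn: "\<forall>E\<in>S. 0 \<le> u E" and r: "r > 0"
    and veq: "\<forall>E\<in>S. (\<Sum>E'\<in>S. v E' * M E' E) = r * v E"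
    and ueq: "\<forall>E'\<in>S. (\<Sum>E\<in>S. M E' E * u E) = r * u E'"
    and wpos: "\<forall>E\<in>S. 0 < w E"
  shows "(\<Sum>E\<in>S. v E * u E * ln (r * w E / (\<Sum>E'\<in>S. w E' * M E' E))) \<le> 0"
proof -
  define g where "g E = ln (w E / v E)" for E
  note pt = dv_pointwise[OF fin Mnn vpos r veq wpos]
  have "(\<Sum>E\<in>S. v E * u E * ln (r * w E / (\<Sum>E'\<in>S. w E' * M E' E))) \<le>
        (\<Sum>E\<in>S. v E * u E * (g E - (\<Sum>E'\<in>S. v E' * M E' E / (r * v E) * g E')))"
    unfolding g_def using pt(2) vpos unn
    by (intro sum_mono mult_left_mono) (auto intro: mult_nonneg_nonneg less_imp_le)
  also have "\<dots> = (\<Sum>E\<in>S. v E * u E * g E) -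
                  (\<Sum>E\<in>S. \<Sum>E'\<in>S. v E * u E * (v E' * M E' E / (r * v E) * g E'))"
    by (simp add: right_diff_distrib sum_subtractf sum_distrib_left)
  also have "(\<Sum>E\<in>S. \<Sum>E'\<in>S. v E * u E * (v E' * M E' E / (r * v E) * g E')) =
             (\<Sum>E'\<in>S. \<Sum>E\<in>S. (v E' * g E' / r) * (M E' E * u E))"
    by (subst sum.swap) (intro sum.cong refl, use vpos r in auto)
  also have "\<dots> = (\<Sum>E'\<in>S. (v E' * g E' / r) * (\<Sum>E\<in>S. M E' E * u E))"
    by (simp add: sum_distrib_left)
  also have "\<dots> = (\<Sum>E\<in>S. v E * u E * g E)"
    using ueq r by (intro sum.cong refl) auto
  finally show ?thesis by simp
qed

section \<open>General facts about the rate function \<open>I\<close>\<close>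

lemma pairsK_iff: "E \<in> pairsK K \<longleftrightarrow> fst E < K \<and> snd E < K"
  by (cases E) (simp add: pairsK_def)

lemma sum_pairsK: "(\<Sum>E\<in>pairsK K. h E) = (\<Sum>i<K. \<Sum>j<K. h (i, j))"
  unfolding pairsK_def by (simp add: sum.cartesian_product)

lemma ereal_diff_le_of_le:
  assumes "ereal (a - b) \<le> I"
  shows "ereal a - I \<le> ereal b"
  using assms by (cases I) simp_all

lemma dv_term_eq:
  assumes "fE \<noteq> 0 \<Longrightarrow> 0 < wE"
  shows "dv_term fE vE wE = ereal (fE * ln (vE / wE))"
  using assms by (auto simp: dv_term_def zero_ereal_def)

text \<open>If \<open>f\<close> charges a pair \<open>(i,j)\<close> that the dispersal cannot realise (\<open>d i j = 0\<close>), then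
  \<open>(v B)_(i,j) = 0\<close> for all \<open>v\<close> and hence \<open>I(f) = \<infinity>\<close>.\<close>
lemma I_rate_infinite:
  assumes E0: "E0 \<in> pairsK K" "d (fst E0) (snd E0) = 0" and f0: "f E0 \<noteq> 0"
  shows "I_rate K d f = \<infinity>"
proof -
  define v :: "nat \<times> nat \<Rightarrow> real" where "v E = 1" for E
  have "vB K d v E0 = 0" using E0(2) by (simp add: vB_def Bmat_def)
  then have "dv_term (f E0) (v E0) (vB K d v E0) = \<infinity>" using f0 by (simp add: dv_term_def)
  moreover have "finite (pairsK K)" by (simp add: pairsK_def)
  ultimately have "(\<Sum>E\<in>pairsK K. dv_term (f E) (v E) (vB K d v E)) = \<infinity>"
    using E0(1) by (subst sum_Pinfty) auto
  moreover have "(\<Sum>E\<in>pairsK K. dv_term (f E) (v E) (vB K d v E)) \<le> I_rate K d f"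
    unfolding I_rate_def by (rule SUP_upper) (simp add: v_def)
  ultimately show ?thesis by simp
qed

text \<open>The supremum defining \<open>I(f)\<close> may be tested with a nonnegative vector \<open>v\<close>, as long as
  \<open>v\<close> and \<open>v B\<close> are positive on the support of \<open>f\<close>: approximate \<open>v\<close> by \<open>v + \<epsilon>\<close>.\<close>
lemma I_rate_ge_nonneg_test:
  assumes dnn: "\<forall>i<K. \<forall>j<K. 0 \<le> d i j" and vnn: "\<forall>E\<in>pairsK K. 0 \<le> v E"
    and supp: "\<forall>E\<in>pairsK K. f E \<noteq> 0 \<longrightarrow> 0 < v E \<and> 0 < vB K d v E"
  shows "(\<Sum>E\<in>pairsK K. dv_term (f E) (v E) (vB K d v E)) \<le> I_rate K d f"
proof -
  define c where "c E = (\<Sum>E'\<in>pairsK K. Bmat d E' E)" for E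
  define G where "G \<epsilon> = (\<Sum>E\<in>pairsK K. f E * ln ((v E + \<epsilon>) / (vB K d v E + \<epsilon> * c E)))" for \<epsilon>
  have c_nn: "0 \<le> c E" if "E \<in> pairsK K" for E
    unfolding c_def using dnn that by (intro sum_nonneg) (auto simp: Bmat_def pairsK_def)
  have vB_shift: "vB K d (\<lambda>E. v E + \<epsilon>) E = vB K d v E + \<epsilon> * c E" for \<epsilon> E
    unfolding vB_def c_def by (simp add: distrib_right sum.distrib sum_distrib_left)
  have dv_G: "(\<Sum>E\<in>pairsK K. dv_term (f E) (v E + \<epsilon>) (vB K d v E + \<epsilon> * c E)) = ereal (G \<epsilon>)"
    if "0 \<le> \<epsilon>" for \<epsilon>
  proof -
    have "0 < vB K d v E + \<epsilon> * c E" if "E \<in> pairsK K" "f E \<noteq> 0" for E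
      using supp c_nn that \<open>0 \<le> \<epsilon>\<close> by (simp add: add_pos_nonneg)
    then show ?thesis unfolding G_def sum_ereal[symmetric] by (intro sum.cong refl dv_term_eq) auto
  qed
  have le: "ereal (G \<epsilon>) \<le> I_rate K d f" if "0 < \<epsilon>" for \<epsilon>
  proof -
    have "\<forall>E\<in>pairsK K. 0 < v E + \<epsilon>" using vnn that by (simp add: add_nonneg_pos)
    then have "(\<Sum>E\<in>pairsK K. dv_term (f E) (v E + \<epsilon>) (vB K d (\<lambda>E. v E + \<epsilon>) E)) \<le> I_rate K d f"
      unfolding I_rate_def by (intro SUP_upper) simp
    then show ?thesis using dv_G that by (simp add: vB_shift)
  qed
  have "(G \<longlongrightarrow> G 0) (at_right 0)"
    unfolding G_def
  proof (intro tendsto_sum)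
    fix E assume E: "E \<in> pairsK K"
    show "((\<lambda>\<epsilon>. f E * ln ((v E + \<epsilon>) / (vB K d v E + \<epsilon> * c E))) \<longlongrightarrow>
          f E * ln ((v E + 0) / (vB K d v E + 0 * c E))) (at_right 0)"
    proof (cases "f E = 0")
      case False
      then have "0 < v E" "0 < vB K d v E" using supp E by auto
      then show ?thesis by (intro tendsto_intros) auto
    qed simp
  qed
  then have "((\<lambda>\<epsilon>. ereal (G \<epsilon>)) \<longlongrightarrow> ereal (G 0)) (at_right 0)" by (simp add: lim_ereal)
  moreover have "\<forall>\<^sub>F \<epsilon> in at_right 0. ereal (G \<epsilon>) \<le> I_rate K d f"
    using eventually_at_right_less[of "0::real"] by (rule eventually_mono) (rule le)
  ultimately have "ereal (G 0) \<le> I_rate K d f"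
    by (intro tendsto_le[OF _ tendsto_const]) simp_all
  then show ?thesis using dv_G[of 0] by simp
qed

section \<open>The model on pairs of patches\<close>

text \<open>On pairs \<open>E = (i,j)\<close> we use the weight \<open>V(i,j) = m_i(e_1) m_j(e_2)\<close>, the lift
  \<open>v0(i,j) = d_ij V(i,j) t_i\<close> of \<open>t\<close> and \<open>\<phi>_j = (D \<psi>)_j\<close>: these are left and right
  eigenvectors of \<open>M = B diag(V)\<close> for \<open>r\<close>, and \<open>f0 \<sim> v0 \<phi>\<close> is the optimal frequency vector.\<close>
locale two_step_model =
  fixes K :: nat and d :: "nat \<Rightarrow> nat \<Rightarrow> real" and m1 m2 t \<psi> :: "nat \<Rightarrow> real" and r :: real
  assumes K: "K \<ge> 1"
    and nn: "\<forall>i<K. \<forall>j<K. 0 \<le> d i j"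
    and rows: "\<forall>i<K. (\<Sum>j<K. d i j) = 1"
    and m1pos: "\<forall>i<K. 0 < m1 i" and m2pos: "\<forall>i<K. 0 < m2 i"
    and rpos: "r > 0"
    and tpos: "\<forall>i<K. 0 < t i"
    and teq: "\<forall>j<K. (\<Sum>i<K. A2 K d m1 m2 i j * t i) = r * t j"
    and \<psi>pos: "\<forall>i<K. 0 < \<psi> i"
    and \<psi>eq: "\<forall>i<K. (\<Sum>j<K. A2 K d m1 m2 i j * \<psi> j) = r * \<psi> i"
begin

definition V :: "nat \<times> nat \<Rightarrow> real" where "V E = m1 (fst E) * m2 (snd E)"
definition v0 :: "nat \<times> nat \<Rightarrow> real" where "v0 E = d (fst E) (snd E) * V E * t (fst E)"
definition \<phi> :: "nat \<Rightarrow> real" where "\<phi> l = (\<Sum>q<K. d l q * \<psi> q)"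
definition M :: "nat \<times> nat \<Rightarrow> nat \<times> nat \<Rightarrow> real" where "M E' E = Bmat d E' E * V E"

definition S :: "(nat \<times> nat) set" where "S = {E \<in> pairsK K. 0 < d (fst E) (snd E)}"

definition Z :: real where "Z = (\<Sum>E\<in>pairsK K. v0 E * \<phi> (snd E))"
definition f0 :: "nat \<times> nat \<Rightarrow> real" where "f0 E = v0 E * \<phi> (snd E) / Z"

lemma finite_pairs: "finite (pairsK K)" by (simp add: pairsK_def)
lemma finite_S: "finite S" using finite_pairs by (simp add: S_def)
lemma S_pairs: "S \<subseteq> pairsK K" by (auto simp: S_def)

lemma V_pos: "E \<in> pairsK K \<Longrightarrow> 0 < V E" using m1pos m2pos by (simp add: V_def pairsK_iff)

lemma d_zero_off_S: assumes "E \<in> pairsK K" "E \<notin> S" shows "d (fst E) (snd E) = 0"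
  using nn assms by (force simp: S_def pairsK_iff)

lemma v0_nonneg: "E \<in> pairsK K \<Longrightarrow> 0 \<le> v0 E"
  using nn V_pos tpos by (simp add: v0_def pairsK_iff order_less_imp_le)

lemma v0_pos: "E \<in> S \<Longrightarrow> 0 < v0 E"
  using V_pos tpos S_pairs by (auto simp: v0_def S_def pairsK_iff)

lemma v0_zero: "E \<in> pairsK K \<Longrightarrow> E \<notin> S \<Longrightarrow> v0 E = 0"
  using d_zero_off_S by (simp add: v0_def)

lemma \<phi>_pos: assumes "l < K" shows "0 < \<phi> l"
proof -
  have "0 < (\<Sum>j<K. d l j)" using rows assms by simp
  then obtain q where q: "q \<in> {..<K}" "0 < d l q" by (rule sum_pos_obtain)
  show ?thesis unfolding \<phi>_def
    using q \<psi>pos nn assms by (intro sum_pos2[of _ q]) (auto intro!: mult_nonneg_nonneg simp: order_less_imp_le)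
qed

lemma \<phi>_snd_pos: "E \<in> pairsK K \<Longrightarrow> 0 < \<phi> (snd E)"
  using \<phi>_pos by (simp add: pairsK_iff)

lemma M_nonneg: "E' \<in> pairsK K \<Longrightarrow> E \<in> pairsK K \<Longrightarrow> 0 \<le> M E' E"
  using nn V_pos by (simp add: M_def Bmat_def pairsK_iff order_less_imp_le)

lemma M_nonneg_on_S: "\<forall>E\<in>S. \<forall>E'\<in>S. 0 \<le> M E' E"
  using M_nonneg S_pairs by blast

lemma vB_M: "vB K d w E * V E = (\<Sum>E'\<in>pairsK K. w E' * M E' E)"
  unfolding vB_def M_def by (simp add: sum_distrib_right mult.assoc)

text \<open>\<open>v0 B = r d_(kl) t_k\<close>: the left eigenvector equation of \<open>A^(2)\<close> lifted to pairs.\<close>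
lemma v0_vB: assumes "E \<in> pairsK K" shows "vB K d v0 E = r * d (fst E) (snd E) * t (fst E)"
proof -
  obtain k l where E: "E = (k, l)" by (cases E)
  have k: "k < K" using assms E by (simp add: pairsK_iff)
  have "vB K d v0 E = (\<Sum>i<K. \<Sum>j<K. d i j * (m1 i * m2 j) * t i * (d j k * d k l))"
    unfolding vB_def sum_pairsK Bmat_def v0_def V_def E by simp
  also have "\<dots> = d k l * (\<Sum>i<K. A2 K d m1 m2 i k * t i)"
    unfolding A2_def by (simp add: sum_distrib_left sum_distrib_right mult_ac)
  also have "\<dots> = d k l * (r * t k)" using teq k by simp
  finally show ?thesis by (simp add: E mult_ac)
qed

lemma vB_v0_pos: "E \<in> S \<Longrightarrow> 0 < vB K d v0 E"
  using v0_vB tpos rpos S_pairs by (auto simp: S_def pairsK_iff)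

lemma v0_ratio: assumes "E \<in> S" shows "v0 E / vB K d v0 E = V E / r"
  using v0_vB[of E] assms S_pairs tpos rpos by (auto simp: S_def pairsK_iff v0_def)

text \<open>\<open>M \<phi> = r \<phi>\<close>: the right eigenvector equation of \<open>A^(2)\<close> lifted to pairs.\<close>
lemma M_\<phi>: assumes "E' \<in> pairsK K"
  shows "(\<Sum>E\<in>pairsK K. M E' E * \<phi> (snd E)) = r * \<phi> (snd E')"
proof -
  obtain i j where E': "E' = (i, j)" by (cases E')
  have "(\<Sum>E\<in>pairsK K. M E' E * \<phi> (snd E)) =
        (\<Sum>k<K. \<Sum>l<K. d j k * d k l * (m1 k * m2 l) * (\<Sum>q<K. d l q * \<psi> q))"
    unfolding sum_pairsK M_def Bmat_def V_def \<phi>_def E' by simp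
  also have "\<dots> = (\<Sum>k<K. d j k * (\<Sum>l<K. \<Sum>q<K. m1 k * d k l * m2 l * d l q * \<psi> q))"
    by (simp add: sum_distrib_left mult_ac)
  also have "\<dots> = (\<Sum>k<K. d j k * (\<Sum>q<K. \<Sum>l<K. m1 k * d k l * m2 l * d l q * \<psi> q))"
    by (subst sum.swap) simp
  also have "\<dots> = (\<Sum>k<K. d j k * (\<Sum>q<K. A2 K d m1 m2 k q * \<psi> q))"
    unfolding A2_def by (simp add: sum_distrib_right)
  also have "\<dots> = (\<Sum>k<K. d j k * (r * \<psi> k))"
    using \<psi>eq by (intro sum.cong) auto
  also have "\<dots> = r * \<phi> j" by (simp add: \<phi>_def sum_distrib_left mult_ac)
  finally show ?thesis by (simp add: E')
qed

lemma R_fun_eq: "R_fun K m1 m2 f = (\<Sum>E\<in>pairsK K. f E * ln (V E))"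
  by (simp add: R_fun_def V_def)

lemma sum_ln_V_div_r:
  assumes "f \<in> FE K"
  shows "(\<Sum>E\<in>pairsK K. f E * ln (V E / r)) = R_fun K m1 m2 f - ln r"
proof -
  have "(\<Sum>E\<in>pairsK K. f E * ln (V E / r)) = (\<Sum>E\<in>pairsK K. f E * ln (V E) - f E * ln r)"
  proof (intro sum.cong refl)
    fix E assume "E \<in> pairsK K"
    with V_pos have "0 < V E" by blast
    with rpos show "f E * ln (V E / r) = f E * ln (V E) - f E * ln r"
      by (simp add: ln_div right_diff_distrib)
  qed
  also have "\<dots> = R_fun K m1 m2 f - (\<Sum>E\<in>pairsK K. f E) * ln r"
    by (simp add: R_fun_eq sum_subtractf sum_distrib_right)
  finally show ?thesis using assms by (simp add: FE_def)
qed

lemma R_minus_I_le: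
  assumes f: "f \<in> FE K"
  shows "ereal (R_fun K m1 m2 f) - I_rate K d f \<le> ereal (ln r)"
proof (cases "\<exists>E\<in>pairsK K. f E \<noteq> 0 \<and> E \<notin> S")
  case True
  then obtain E0 where "E0 \<in> pairsK K" "f E0 \<noteq> 0" "E0 \<notin> S" by blast
  then have "I_rate K d f = \<infinity>" using d_zero_off_S by (intro I_rate_infinite) auto
  then show ?thesis by simp
next
  case False
  then have supp: "\<forall>E\<in>pairsK K. f E \<noteq> 0 \<longrightarrow> E \<in> S" by blast
  have "(\<Sum>E\<in>pairsK K. dv_term (f E) (v0 E) (vB K d v0 E)) = ereal (\<Sum>E\<in>pairsK K. f E * ln (V E / r))"
    unfolding sum_ereal[symmetric]
  proof (intro sum.cong refl)
    fix E assume "E \<in> pairsK K"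
    show "dv_term (f E) (v0 E) (vB K d v0 E) = ereal (f E * ln (V E / r))"
    proof (cases "f E = 0")
      case False
      then have "E \<in> S" using supp \<open>E \<in> pairsK K\<close> by blast
      then show ?thesis using vB_v0_pos v0_ratio by (simp add: dv_term_eq)
    qed (simp add: dv_term_def)
  qed
  also have "\<dots> = ereal (R_fun K m1 m2 f - ln r)" using sum_ln_V_div_r[OF f] by simp
  finally have "ereal (R_fun K m1 m2 f - ln r) \<le> I_rate K d f"
    using I_rate_ge_nonneg_test[OF nn, of v0 f] supp v0_nonneg v0_pos vB_v0_pos by auto
  then show ?thesis by (rule ereal_diff_le_of_le)
qed

lemma Z_pos: "0 < Z"
proof -
  have "0 < (\<Sum>j<K. d 0 j)" using rows K by simp
  then obtain q where q: "q \<in> {..<K}" "0 < d 0 q" by (rule sum_pos_obtain)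
  then have ES: "(0, q) \<in> S" using K by (simp add: S_def pairsK_iff)
  then have "0 < v0 (0, q) * \<phi> (snd (0, q))" using v0_pos \<phi>_pos q(1) by simp
  moreover have "0 \<le> v0 E * \<phi> (snd E)" if "E \<in> pairsK K" for E
    using v0_nonneg \<phi>_pos that by (simp add: pairsK_iff order_less_imp_le)
  ultimately show ?thesis
    unfolding Z_def using finite_pairs ES S_pairs by (intro sum_pos2[of _ "(0, q)"]) auto
qed

lemma f0_FE: "f0 \<in> FE K"
proof -
  have "0 \<le> f0 E" if "E \<in> pairsK K" for E
    using divide_nonneg_pos[OF mult_nonneg_nonneg[OF v0_nonneg[OF that] less_imp_le[OF \<phi>_pos]] Z_pos]
      that by (simp add: f0_def pairsK_iff)
  then have "\<forall>E\<in>pairsK K. 0 \<le> f0 E" by blast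
  moreover have "(\<Sum>E\<in>pairsK K. f0 E) = 1"
    using Z_pos by (simp add: f0_def sum_divide_distrib[symmetric] Z_def)
  ultimately show ?thesis by (simp add: FE_def)
qed

lemma f0_zero_off_S: "E \<in> pairsK K \<Longrightarrow> E \<notin> S \<Longrightarrow> f0 E = 0"
  using v0_zero by (simp add: f0_def)

lemma f0_pos: assumes "E \<in> S" shows "0 < f0 E"
  using v0_pos[OF assms] \<phi>_pos[of "snd E"] Z_pos assms S_pairs
  unfolding f0_def by (intro divide_pos_pos mult_pos_pos) (auto simp: pairsK_iff)

text \<open>Restricted to the realisable pairs \<open>S\<close>, \<open>v0\<close> and \<open>\<phi> \<circ> snd\<close> are still left and right
  eigenvectors of \<open>M\<close>, since \<open>v0\<close> vanishes off \<open>S\<close> and \<open>M E' E = 0\<close> for \<open>E \<notin> S\<close>.\<close>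
lemma v0_M_on_S: "\<forall>E\<in>S. (\<Sum>E'\<in>S. v0 E' * M E' E) = r * v0 E"
proof
  fix E assume E: "E \<in> S"
  have "(\<Sum>E'\<in>S. v0 E' * M E' E) = (\<Sum>E'\<in>pairsK K. v0 E' * M E' E)"
    using finite_pairs S_pairs v0_zero by (intro sum.mono_neutral_left) auto
  also have "\<dots> = vB K d v0 E * V E" by (simp add: vB_M)
  also have "\<dots> = r * v0 E" using v0_vB[of E] E S_pairs by (auto simp: v0_def)
  finally show "(\<Sum>E'\<in>S. v0 E' * M E' E) = r * v0 E" .
qed

lemma M_\<phi>_on_S: "\<forall>E'\<in>S. (\<Sum>E\<in>S. M E' E * \<phi> (snd E)) = r * \<phi> (snd E')"
proof
  fix E' assume E': "E' \<in> S"
  have "(\<Sum>E\<in>S. M E' E * \<phi> (snd E)) = (\<Sum>E\<in>pairsK K. M E' E * \<phi> (snd E))"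
    using finite_pairs S_pairs d_zero_off_S by (intro sum.mono_neutral_left) (auto simp: M_def Bmat_def)
  also have "\<dots> = r * \<phi> (snd E')" using M_\<phi>[of E'] E' S_pairs by auto
  finally show "(\<Sum>E\<in>S. M E' E * \<phi> (snd E)) = r * \<phi> (snd E')" .
qed

lemma partial_wM:
  assumes wpos: "\<forall>E\<in>pairsK K. 0 < w E" and E: "E \<in> S"
  shows "0 < (\<Sum>E'\<in>S. w E' * M E' E)" "(\<Sum>E'\<in>S. w E' * M E' E) \<le> vB K d w E * V E"
proof -
  show "0 < (\<Sum>E'\<in>S. w E' * M E' E)"
    using v0_pos rpos v0_M_on_S wpos E S_pairs
    by (intro dv_pointwise(1)[OF finite_S M_nonneg_on_S, of v0 r w E]) auto
  have "(\<Sum>E'\<in>S. w E' * M E' E) \<le> (\<Sum>E'\<in>pairsK K. w E' * M E' E)"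
    using finite_pairs S_pairs wpos M_nonneg[OF _ S_pairs[THEN subsetD, OF E]]
    by (intro sum_mono2) (auto intro!: mult_nonneg_nonneg simp: order_less_imp_le)
  then show "(\<Sum>E'\<in>S. w E' * M E' E) \<le> vB K d w E * V E" by (simp add: vB_M)
qed

lemma vB_pos_on_S:
  assumes wpos: "\<forall>E\<in>pairsK K. 0 < w E" and E: "E \<in> S"
  shows "0 < vB K d w E"
proof -
  have "0 < V E" using V_pos S_pairs E by blast
  moreover have "0 < vB K d w E * V E" using partial_wM[OF wpos E] by linarith
  ultimately show ?thesis by (simp add: zero_less_mult_iff)
qed

lemma ln_ratio_le:
  assumes wpos: "\<forall>E\<in>pairsK K. 0 < w E" and E: "E \<in> S"
  shows "ln (w E / vB K d w E) \<le> ln (r * w E / (\<Sum>E'\<in>S. w E' * M E' E)) + ln (V E / r)"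
proof -
  define Q where "Q = (\<Sum>E'\<in>S. w E' * M E' E)"
  have EP: "E \<in> pairsK K" using E S_pairs by blast
  have pos: "0 < w E" "0 < vB K d w E" "0 < V E" "0 < Q"
    using wpos EP vB_pos_on_S[OF wpos E] V_pos[OF EP] partial_wM(1)[OF wpos E] by (auto simp: Q_def)
  have "ln (w E / vB K d w E) = ln (r * w E / (vB K d w E * V E)) + ln (V E / r)"
    using pos rpos by (simp add: ln_div ln_mult)
  also have "\<dots> \<le> ln (r * w E / Q) + ln (V E / r)"
    using pos rpos partial_wM(2)[OF wpos E] by (simp add: Q_def divide_left_mono)
  finally show ?thesis by (simp add: Q_def)
qed

lemma f0_test_le:
  assumes wpos: "\<forall>E\<in>pairsK K. 0 < w E"
  shows "(\<Sum>E\<in>pairsK K. f0 E * ln (w E / vB K d w E)) \<le> R_fun K m1 m2 f0 - ln r"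
proof -
  define Q where "Q E = (\<Sum>E'\<in>S. w E' * M E' E)" for E
  have DV: "(\<Sum>E\<in>S. v0 E * \<phi> (snd E) * ln (r * w E / Q E)) \<le> 0"
  proof -
    have "\<forall>E\<in>S. 0 < v0 E" "\<forall>E\<in>S. 0 < w E" using v0_pos wpos S_pairs by auto
    moreover have "\<forall>E\<in>S. 0 \<le> \<phi> (snd E)" using \<phi>_snd_pos S_pairs by (blast intro: less_imp_le)
    ultimately show ?thesis unfolding Q_def
      using donsker_varadhan_inequality[OF finite_S M_nonneg_on_S _ _ rpos v0_M_on_S M_\<phi>_on_S] by blast
  qed
  have "(\<Sum>E\<in>pairsK K. f0 E * ln (w E / vB K d w E)) = (\<Sum>E\<in>S. f0 E * ln (w E / vB K d w E))"
    using finite_pairs S_pairs f0_zero_off_S by (intro sum.mono_neutral_right) auto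
  also have "\<dots> \<le> (\<Sum>E\<in>S. f0 E * (ln (r * w E / Q E) + ln (V E / r)))"
    using ln_ratio_le[OF wpos] less_imp_le[OF f0_pos] unfolding Q_def by (intro sum_mono mult_left_mono)
  also have "\<dots> = (\<Sum>E\<in>S. v0 E * \<phi> (snd E) * ln (r * w E / Q E)) / Z + (\<Sum>E\<in>S. f0 E * ln (V E / r))"
    by (simp add: f0_def distrib_left sum.distrib sum_divide_distrib)
  also have "\<dots> \<le> (\<Sum>E\<in>S. f0 E * ln (V E / r))"
    using DV Z_pos by (simp add: divide_nonpos_pos)
  also have "\<dots> = (\<Sum>E\<in>pairsK K. f0 E * ln (V E / r))"
    using finite_pairs S_pairs f0_zero_off_S by (intro sum.mono_neutral_left) auto
  also have "\<dots> = R_fun K m1 m2 f0 - ln r" by (rule sum_ln_V_div_r[OF f0_FE])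
  finally show ?thesis .
qed

lemma I_rate_f0_le: "I_rate K d f0 \<le> ereal (R_fun K m1 m2 f0 - ln r)"
  unfolding I_rate_def
proof (rule SUP_least)
  fix w :: "nat \<times> nat \<Rightarrow> real" assume "w \<in> {v. \<forall>E\<in>pairsK K. 0 < v E}"
  then have wpos: "\<forall>E\<in>pairsK K. 0 < w E" by simp
  have "(\<Sum>E\<in>pairsK K. dv_term (f0 E) (w E) (vB K d w E)) =
        ereal (\<Sum>E\<in>pairsK K. f0 E * ln (w E / vB K d w E))"
    unfolding sum_ereal[symmetric] using f0_zero_off_S vB_pos_on_S[OF wpos]
    by (intro sum.cong refl dv_term_eq) auto
  with f0_test_le[OF wpos]
  show "(\<Sum>E\<in>pairsK K. dv_term (f0 E) (w E) (vB K d w E)) \<le> ereal (R_fun K m1 m2 f0 - ln r)"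
    by simp
qed

theorem variational_formula:
  "(\<exists>f\<in>FE K. ereal (R_fun K m1 m2 f) - I_rate K d f = ereal (ln r))
   \<and> (\<forall>f\<in>FE K. ereal (R_fun K m1 m2 f) - I_rate K d f \<le> ereal (ln r))"
proof -
  have "ereal (R_fun K m1 m2 f0) - I_rate K d f0 = ereal (ln r)"
    using R_minus_I_le[OF f0_FE] I_rate_f0_le by (cases "I_rate K d f0") auto
  then show ?thesis using R_minus_I_le f0_FE by blast
qed

end

theorem theorem5p3:
  fixes K :: nat
    and d :: "nat \<Rightarrow> nat \<Rightarrow> real"
    and N1 N2 :: "nat \<Rightarrow> nat pmf"
    and \<rho> :: real
  assumes K_pos: "K \<ge> 1"
    and stoch: "stochastic_mat K d"
    and irred: "irreducible_mat K d"
    and aper: "aperiodic_mat K d"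
    and LlogL1: "\<forall>i<K. integrable (measure_pmf (N1 i)) (\<lambda>n. real n * logplus (real n))"
    and LlogL2: "\<forall>i<K. integrable (measure_pmf (N2 i)) (\<lambda>n. real n * logplus (real n))"
    and mpos1: "\<forall>i<K. mean_off (N1 i) > 0"
    and mpos2: "\<forall>i<K. mean_off (N2 i) > 0"
    and rho_pos: "\<rho> > 0"
    and perron: "perron_eigenvalue K (A2 K d (\<lambda>i. mean_off (N1 i)) (\<lambda>i. mean_off (N2 i))) (\<rho>\<^sup>2)"
  shows "(\<exists>f\<in>FE K. ereal (R_fun K (\<lambda>i. mean_off (N1 i)) (\<lambda>i. mean_off (N2 i)) f) - I_rate K d f
                    = ereal (2 * ln \<rho>))
       \<and> (\<forall>f\<in>FE K. ereal (R_fun K (\<lambda>i. mean_off (N1 i)) (\<lambda>i. mean_off (N2 i)) f) - I_rate K d f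
                    \<le> ereal (2 * ln \<rho>))"
proof -
  define m1 where "m1 = (\<lambda>i. mean_off (N1 i))"
  define m2 where "m2 = (\<lambda>i. mean_off (N2 i))"
  have nn: "\<forall>i<K. \<forall>j<K. 0 \<le> d i j" and rows: "\<forall>i<K. (\<Sum>j<K. d i j) = 1"
    using stoch by (auto simp: stochastic_mat_def)
  have m1pos: "\<forall>i<K. 0 < m1 i" and m2pos: "\<forall>i<K. 0 < m2 i"
    using mpos1 mpos2 by (simp_all add: m1_def m2_def)
  obtain t \<psi> where t: "\<forall>i<K. 0 < t i" "\<forall>j<K. (\<Sum>i<K. A2 K d m1 m2 i j * t i) = \<rho>\<^sup>2 * t j"
    and \<psi>: "\<forall>i<K. 0 < \<psi> i" "\<forall>i<K. (\<Sum>j<K. A2 K d m1 m2 i j * \<psi> j) = \<rho>\<^sup>2 * \<psi> i"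
    by (rule A2_perron_vectors[OF K_pos nn irred aper m1pos m2pos perron[folded m1_def m2_def]])
  interpret two_step_model K d m1 m2 t \<psi> "\<rho>\<^sup>2"
    using K_pos nn rows m1pos m2pos rho_pos t \<psi> by unfold_locales simp_all
  have ln_rho: "ln (\<rho>\<^sup>2) = 2 * ln \<rho>" using rho_pos by (simp add: ln_realpow)
  show ?thesis using variational_formula unfolding m1_def m2_def ln_rho .
qed

end
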